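(* Every direct summand of a centrally endo-AIP module is a centrally endo-AIP module.
   Context: Modules are unitary right $R$-modules. For a module $M$ with $S=\mathrm{End}_R(M)$ and $N\le M$, $l_S(N)=\{\phi\in S:\phi(N)=0\}$. An ideal $I$ of $S$ is centrally s-unital if for every $a\in I$ there is $z\in I$ central in $S$ with $az=a$. $M$ is centrally endo-AIP if $l_S(N)$ is a centrally s-unital ideal of $S$ for every fully invariant submodule $N$ of $M$. *)

theory Defs
  imports "HOL-Algebra.Ring"
begin

text \<open>Unitary right R-modules: R is a (HOL-Algebra) ring, M an abelian group
 (additive structure of a record), and sm x r is the right scalar action x r.\<close>

definition right_module ::
  "('r,'c) ring_scheme \<Rightarrow> ('m,'b) ring_scheme \<Rightarrow> ('m \<Rightarrow> 'r \<Rightarrow> 'm) \<Rightarrow> bool" where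
  "right_module R M sm \<longleftrightarrow> ring R \<and> abelian_group M \<and>
     (\<forall>x\<in>carrier M. \<forall>r\<in>carrier R. sm x r \<in> carrier M) \<and>
     (\<forall>x\<in>carrier M. \<forall>y\<in>carrier M. \<forall>r\<in>carrier R.
        sm (x \<oplus>\<^bsub>M\<^esub> y) r = sm x r \<oplus>\<^bsub>M\<^esub> sm y r) \<and>
     (\<forall>x\<in>carrier M. \<forall>r\<in>carrier R. \<forall>s\<in>carrier R.
        sm x (r \<oplus>\<^bsub>R\<^esub> s) = sm x r \<oplus>\<^bsub>M\<^esub> sm x s) \<and>
     (\<forall>x\<in>carrier M. \<forall>r\<in>carrier R. \<forall>s\<in>carrier R.
        sm x (r \<otimes>\<^bsub>R\<^esub> s) = sm (sm x r) s) \<and>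
     (\<forall>x\<in>carrier M. sm x \<one>\<^bsub>R\<^esub> = x)"

definition submod ::
  "('r,'c) ring_scheme \<Rightarrow> ('m,'b) ring_scheme \<Rightarrow> ('m \<Rightarrow> 'r \<Rightarrow> 'm) \<Rightarrow> 'm set \<Rightarrow> bool" where
  "submod R M sm N \<longleftrightarrow> N \<subseteq> carrier M \<and> \<zero>\<^bsub>M\<^esub> \<in> N \<and>
     (\<forall>x\<in>N. \<forall>y\<in>N. x \<oplus>\<^bsub>M\<^esub> y \<in> N) \<and>
     (\<forall>x\<in>N. \<ominus>\<^bsub>M\<^esub> x \<in> N) \<and>
     (\<forall>x\<in>N. \<forall>r\<in>carrier R. sm x r \<in> N)"

text \<open>S = End_R(M): R-linear maps, taken extensional on carrier M. Multiplication
 in S is composition (maps act on the left).\<close>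

definition endo ::
  "('r,'c) ring_scheme \<Rightarrow> ('m,'b) ring_scheme \<Rightarrow> ('m \<Rightarrow> 'r \<Rightarrow> 'm) \<Rightarrow> ('m \<Rightarrow> 'm) set" where
  "endo R M sm = {f. f \<in> carrier M \<rightarrow>\<^sub>E carrier M \<and>
     (\<forall>x\<in>carrier M. \<forall>y\<in>carrier M. f (x \<oplus>\<^bsub>M\<^esub> y) = f x \<oplus>\<^bsub>M\<^esub> f y) \<and>
     (\<forall>x\<in>carrier M. \<forall>r\<in>carrier R. f (sm x r) = sm (f x) r)}"

definition emult :: "('m,'b) ring_scheme \<Rightarrow> ('m \<Rightarrow> 'm) \<Rightarrow> ('m \<Rightarrow> 'm) \<Rightarrow> ('m \<Rightarrow> 'm)" where
  "emult M f g = compose (carrier M) f g"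

definition eadd :: "('m,'b) ring_scheme \<Rightarrow> ('m \<Rightarrow> 'm) \<Rightarrow> ('m \<Rightarrow> 'm) \<Rightarrow> ('m \<Rightarrow> 'm)" where
  "eadd M f g = (\<lambda>x\<in>carrier M. f x \<oplus>\<^bsub>M\<^esub> g x)"

definition eneg :: "('m,'b) ring_scheme \<Rightarrow> ('m \<Rightarrow> 'm) \<Rightarrow> ('m \<Rightarrow> 'm)" where
  "eneg M f = (\<lambda>x\<in>carrier M. \<ominus>\<^bsub>M\<^esub> f x)"

definition ezero :: "('m,'b) ring_scheme \<Rightarrow> ('m \<Rightarrow> 'm)" where
  "ezero M = (\<lambda>x\<in>carrier M. \<zero>\<^bsub>M\<^esub>)"

definition endo_ideal ::
  "('r,'c) ring_scheme \<Rightarrow> ('m,'b) ring_scheme \<Rightarrow> ('m \<Rightarrow> 'r \<Rightarrow> 'm) \<Rightarrow> ('m \<Rightarrow> 'm) set \<Rightarrow> bool" where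
  "endo_ideal R M sm I \<longleftrightarrow> I \<subseteq> endo R M sm \<and> ezero M \<in> I \<and>
     (\<forall>a\<in>I. \<forall>b\<in>I. eadd M a b \<in> I) \<and> (\<forall>a\<in>I. eneg M a \<in> I) \<and>
     (\<forall>a\<in>I. \<forall>s\<in>endo R M sm. emult M s a \<in> I \<and> emult M a s \<in> I)"

definition endo_central ::
  "('r,'c) ring_scheme \<Rightarrow> ('m,'b) ring_scheme \<Rightarrow> ('m \<Rightarrow> 'r \<Rightarrow> 'm) \<Rightarrow> ('m \<Rightarrow> 'm) \<Rightarrow> bool" where
  "endo_central R M sm z \<longleftrightarrow> z \<in> endo R M sm \<and>
     (\<forall>s\<in>endo R M sm. emult M z s = emult M s z)"

definition centrally_s_unital_ideal ::
  "('r,'c) ring_scheme \<Rightarrow> ('m,'b) ring_scheme \<Rightarrow> ('m \<Rightarrow> 'r \<Rightarrow> 'm) \<Rightarrow> ('m \<Rightarrow> 'm) set \<Rightarrow> bool" where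
  "centrally_s_unital_ideal R M sm I \<longleftrightarrow> endo_ideal R M sm I \<and>
     (\<forall>a\<in>I. \<exists>z\<in>I. endo_central R M sm z \<and> emult M a z = a)"

definition fully_invariant ::
  "('r,'c) ring_scheme \<Rightarrow> ('m,'b) ring_scheme \<Rightarrow> ('m \<Rightarrow> 'r \<Rightarrow> 'm) \<Rightarrow> 'm set \<Rightarrow> bool" where
  "fully_invariant R M sm N \<longleftrightarrow> submod R M sm N \<and> (\<forall>f\<in>endo R M sm. f ` N \<subseteq> N)"

definition lS ::
  "('r,'c) ring_scheme \<Rightarrow> ('m,'b) ring_scheme \<Rightarrow> ('m \<Rightarrow> 'r \<Rightarrow> 'm) \<Rightarrow> 'm set \<Rightarrow> ('m \<Rightarrow> 'm) set" where
  "lS R M sm N = {f\<in>endo R M sm. \<forall>x\<in>N. f x = \<zero>\<^bsub>M\<^esub>}"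

definition centrally_endo_AIP ::
  "('r,'c) ring_scheme \<Rightarrow> ('m,'b) ring_scheme \<Rightarrow> ('m \<Rightarrow> 'r \<Rightarrow> 'm) \<Rightarrow> bool" where
  "centrally_endo_AIP R M sm \<longleftrightarrow> right_module R M sm \<and>
     (\<forall>N. fully_invariant R M sm N \<longrightarrow> centrally_s_unital_ideal R M sm (lS R M sm N))"

definition direct_summand ::
  "('r,'c) ring_scheme \<Rightarrow> ('m,'b) ring_scheme \<Rightarrow> ('m \<Rightarrow> 'r \<Rightarrow> 'm) \<Rightarrow> 'm set \<Rightarrow> bool" where
  "direct_summand R M sm N \<longleftrightarrow> submod R M sm N \<and>
     (\<exists>K. submod R M sm K \<and> N \<inter> K = {\<zero>\<^bsub>M\<^esub>} \<and>
          (\<forall>x\<in>carrier M. \<exists>a\<in>N. \<exists>b\<in>K. x = a \<oplus>\<^bsub>M\<^esub> b))"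

end

theory Submission
  imports Defs
begin

(* Write M = N \<oplus> K and let p be the projection onto N. For a fully invariant X \<le> N, the
   elements y of M with p (f y) \<in> X for every f \<in> End(M) form a fully invariant submodule Y of
   M that contains X. If a \<in> End(N) kills X, then a \<circ> p kills Y, so some central z \<in> l(Y)
   satisfies a \<circ> p \<circ> z = a \<circ> p. Being central, z commutes with p and so maps N into N. Its
   restriction to N kills X \<subseteq> Y, satisfies a z = a, and is central in End(N) because every
   g \<in> End(N) extends to g \<circ> p \<in> End(M). *)

lemma right_moduleD:
  assumes "right_module R G sm"
  shows "abelian_group G"
    and "\<And>x r. x \<in> carrier G \<Longrightarrow> r \<in> carrier R \<Longrightarrow> sm x r \<in> carrier G"
    and "\<And>x y r. x \<in> carrier G \<Longrightarrow> y \<in> carrier G \<Longrightarrow> r \<in> carrier R \<Longrightarrow>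
           sm (x \<oplus>\<^bsub>G\<^esub> y) r = sm x r \<oplus>\<^bsub>G\<^esub> sm y r"
  using assms unfolding right_module_def by auto

lemma smult_zero:
  assumes "right_module R G sm" "r \<in> carrier R"
  shows "sm \<zero>\<^bsub>G\<^esub> r = \<zero>\<^bsub>G\<^esub>"
proof -
  interpret abelian_group G by (rule right_moduleD(1)[OF assms(1)])
  have "sm \<zero>\<^bsub>G\<^esub> r \<in> carrier G" using right_moduleD(2)[OF assms(1)] assms(2) by simp
  moreover have "sm \<zero>\<^bsub>G\<^esub> r = sm \<zero>\<^bsub>G\<^esub> r \<oplus>\<^bsub>G\<^esub> sm \<zero>\<^bsub>G\<^esub> r"
    using right_moduleD(3)[OF assms(1), of "\<zero>\<^bsub>G\<^esub>" "\<zero>\<^bsub>G\<^esub>" r] assms(2) by simp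
  ultimately show ?thesis by simp
qed

lemma smult_a_inv:
  assumes "right_module R G sm" "r \<in> carrier R" "x \<in> carrier G"
  shows "sm (\<ominus>\<^bsub>G\<^esub> x) r = \<ominus>\<^bsub>G\<^esub> sm x r"
proof -
  interpret abelian_group G by (rule right_moduleD(1)[OF assms(1)])
  have "sm (\<ominus>\<^bsub>G\<^esub> x) r \<oplus>\<^bsub>G\<^esub> sm x r = sm (\<ominus>\<^bsub>G\<^esub> x \<oplus>\<^bsub>G\<^esub> x) r"
    using right_moduleD(3)[OF assms(1)] assms by simp
  also have "\<dots> = \<zero>\<^bsub>G\<^esub>" using assms smult_zero by (simp add: l_neg)
  finally show ?thesis using assms right_moduleD(2)[OF assms(1)]
    by (intro minus_equality[symmetric]) auto
qed

lemma endoD: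
  assumes "f \<in> endo R G sm"
  shows "\<And>x. x \<in> carrier G \<Longrightarrow> f x \<in> carrier G"
    and "\<And>x. x \<notin> carrier G \<Longrightarrow> f x = undefined"
    and "\<And>x y. x \<in> carrier G \<Longrightarrow> y \<in> carrier G \<Longrightarrow> f (x \<oplus>\<^bsub>G\<^esub> y) = f x \<oplus>\<^bsub>G\<^esub> f y"
    and "\<And>x r. x \<in> carrier G \<Longrightarrow> r \<in> carrier R \<Longrightarrow> f (sm x r) = sm (f x) r"
  using assms unfolding endo_def by (auto simp: PiE_def Pi_def extensional_def)

lemma endo_zero:
  assumes "abelian_group G" "f \<in> endo R G sm"
  shows "f \<zero>\<^bsub>G\<^esub> = \<zero>\<^bsub>G\<^esub>"
proof -
  interpret abelian_group G by fact
  have "f \<zero>\<^bsub>G\<^esub> \<in> carrier G" using endoD(1)[OF assms(2)] by simp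
  moreover have "f \<zero>\<^bsub>G\<^esub> = f \<zero>\<^bsub>G\<^esub> \<oplus>\<^bsub>G\<^esub> f \<zero>\<^bsub>G\<^esub>"
    using endoD(3)[OF assms(2), of "\<zero>\<^bsub>G\<^esub>" "\<zero>\<^bsub>G\<^esub>"] by simp
  ultimately show ?thesis by simp
qed

lemma endo_a_inv:
  assumes "abelian_group G" "f \<in> endo R G sm" "x \<in> carrier G"
  shows "f (\<ominus>\<^bsub>G\<^esub> x) = \<ominus>\<^bsub>G\<^esub> f x"
proof -
  interpret abelian_group G by fact
  have "f (\<ominus>\<^bsub>G\<^esub> x) \<oplus>\<^bsub>G\<^esub> f x = f (\<ominus>\<^bsub>G\<^esub> x \<oplus>\<^bsub>G\<^esub> x)"
    using endoD(3)[OF assms(2)] assms by simp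
  also have "\<dots> = \<zero>\<^bsub>G\<^esub>" using assms endo_zero by (simp add: l_neg)
  finally show ?thesis using assms endoD(1)[OF assms(2)]
    by (intro minus_equality[symmetric]) auto
qed

lemma endo_id:
  assumes "right_module R G sm"
  shows "(\<lambda>x\<in>carrier G. x) \<in> endo R G sm"
proof -
  interpret abelian_group G by (rule right_moduleD(1)[OF assms])
  show ?thesis using right_moduleD(2)[OF assms] unfolding endo_def by auto
qed

lemma endo_ezero:
  assumes "right_module R G sm"
  shows "ezero G \<in> endo R G sm"
proof -
  interpret abelian_group G by (rule right_moduleD(1)[OF assms])
  show ?thesis using right_moduleD(2)[OF assms] smult_zero[OF assms]
    unfolding endo_def ezero_def by auto
qed

lemma endo_eadd:
  assumes "right_module R G sm" "f \<in> endo R G sm" "g \<in> endo R G sm"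
  shows "eadd G f g \<in> endo R G sm"
proof -
  interpret abelian_group G by (rule right_moduleD(1)[OF assms(1)])
  show ?thesis
    using endoD[OF assms(2)] endoD[OF assms(3)] right_moduleD(2,3)[OF assms(1)]
    unfolding endo_def eadd_def by (auto simp: a_ac)
qed

lemma endo_eneg:
  assumes "right_module R G sm" "f \<in> endo R G sm"
  shows "eneg G f \<in> endo R G sm"
proof -
  interpret abelian_group G by (rule right_moduleD(1)[OF assms(1)])
  show ?thesis
    using endoD[OF assms(2)] smult_a_inv[OF assms(1)] right_moduleD(2)[OF assms(1)]
    unfolding endo_def eneg_def by (auto simp: minus_add)
qed

lemma endo_emult:
  assumes "right_module R G sm" "f \<in> endo R G sm" "g \<in> endo R G sm"
  shows "emult G f g \<in> endo R G sm"
proof -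
  interpret abelian_group G by (rule right_moduleD(1)[OF assms(1)])
  show ?thesis using endoD[OF assms(2)] endoD[OF assms(3)] right_moduleD(2)[OF assms(1)]
    unfolding endo_def emult_def compose_def by auto
qed

lemma lS_endo_ideal:
  assumes "right_module R G sm" "fully_invariant R G sm X"
  shows "endo_ideal R G sm (lS R G sm X)"
proof -
  interpret abelian_group G by (rule right_moduleD(1)[OF assms(1)])
  have XG: "\<And>x. x \<in> X \<Longrightarrow> x \<in> carrier G"
    and invX: "\<And>f x. f \<in> endo R G sm \<Longrightarrow> x \<in> X \<Longrightarrow> f x \<in> X"
    using assms(2) unfolding fully_invariant_def submod_def by blast+
  show ?thesis
    unfolding endo_ideal_def
  proof (intro conjI ballI)
    show "lS R G sm X \<subseteq> endo R G sm" by (auto simp: lS_def)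
    show "ezero G \<in> lS R G sm X"
      using endo_ezero[OF assms(1)] XG by (simp add: lS_def ezero_def)
  next
    fix a b assume "a \<in> lS R G sm X" "b \<in> lS R G sm X"
    then show "eadd G a b \<in> lS R G sm X"
      using endo_eadd[OF assms(1)] XG by (simp add: lS_def eadd_def)
  next
    fix a assume "a \<in> lS R G sm X"
    then show "eneg G a \<in> lS R G sm X"
      using endo_eneg[OF assms(1)] XG by (simp add: lS_def eneg_def)
  next
    fix a s assume a: "a \<in> lS R G sm X" and s: "s \<in> endo R G sm"
    then show "emult G s a \<in> lS R G sm X"
      using endo_emult[OF assms(1) s] endo_zero[OF abelian_group_axioms s] XG
      by (simp add: lS_def emult_def compose_def)
    show "emult G a s \<in> lS R G sm X"
      using a endo_emult[OF assms(1) _ s] invX[OF s] XG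
      by (simp add: lS_def emult_def compose_def)
  qed
qed

lemma a_inv_carrier_update:
  assumes "abelian_group G" "submod R G sm N" "x \<in> N"
  shows "\<ominus>\<^bsub>G\<lparr>carrier := N\<rparr>\<^esub> x = \<ominus>\<^bsub>G\<^esub> x"
proof -
  interpret abelian_group G by fact
  have "subgroup N (add_monoid G)"
    using assms(2) unfolding submod_def by (auto intro!: subgroup.intro simp: a_inv_def)
  moreover have "add_monoid (G\<lparr>carrier := N\<rparr>) = (add_monoid G)\<lparr>carrier := N\<rparr>" by simp
  ultimately show ?thesis
    using group.m_inv_consistent[OF a_group] assms(3) by (simp add: a_inv_def)
qed

lemma right_module_submod:
  assumes "right_module R G sm" "submod R G sm N"
  shows "right_module R (G\<lparr>carrier := N\<rparr>) sm"
proof -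
  interpret abelian_group G by (rule right_moduleD(1)[OF assms(1)])
  have NG: "N \<subseteq> carrier G" using assms(2) unfolding submod_def by auto
  have "\<exists>y\<in>N. y \<oplus>\<^bsub>G\<^esub> x = \<zero>\<^bsub>G\<^esub>" if "x \<in> N" for x
    using that assms(2) NG unfolding submod_def by (auto intro!: bexI[of _ "\<ominus>\<^bsub>G\<^esub> x"] l_neg)
  then have "abelian_group (G\<lparr>carrier := N\<rparr>)"
    using assms(2) NG unfolding submod_def
    by (intro abelian_groupI) (auto simp: subsetD[OF NG] a_ac)
  then show ?thesis using assms(1,2) NG unfolding right_module_def submod_def
    by (auto simp: subsetD)
qed

lemma submod_of_submod_carrier_update:
  assumes "abelian_group G" "submod R G sm N" "submod R (G\<lparr>carrier := N\<rparr>) sm X"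
  shows "submod R G sm X"
proof -
  have "X \<subseteq> N" using assms(3) unfolding submod_def by simp
  have "\<ominus>\<^bsub>G\<^esub> x \<in> X" if "x \<in> X" for x
  proof -
    have "\<ominus>\<^bsub>G\<lparr>carrier := N\<rparr>\<^esub> x \<in> X" using that assms(3) unfolding submod_def by simp
    then show ?thesis using a_inv_carrier_update[OF assms(1,2)] that \<open>X \<subseteq> N\<close> by auto
  qed
  then show ?thesis using \<open>X \<subseteq> N\<close> assms(2,3) unfolding submod_def by auto
qed

lemma endo_carrier_update_iff:
  "f \<in> endo R (G\<lparr>carrier := N\<rparr>) sm \<longleftrightarrow> f \<in> N \<rightarrow>\<^sub>E N \<and>
     (\<forall>x\<in>N. \<forall>y\<in>N. f (x \<oplus>\<^bsub>G\<^esub> y) = f x \<oplus>\<^bsub>G\<^esub> f y) \<and>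
     (\<forall>x\<in>N. \<forall>r\<in>carrier R. f (sm x r) = sm (f x) r)"
  unfolding endo_def by simp

lemma endo_restrict:
  assumes "f \<in> endo R G sm" "submod R G sm N" "\<And>x. x \<in> N \<Longrightarrow> f x \<in> N"
  shows "restrict f N \<in> endo R (G\<lparr>carrier := N\<rparr>) sm"
proof -
  have N: "\<And>x. x \<in> N \<Longrightarrow> x \<in> carrier G" "\<And>x y. x \<in> N \<Longrightarrow> y \<in> N \<Longrightarrow> x \<oplus>\<^bsub>G\<^esub> y \<in> N"
    "\<And>x r. x \<in> N \<Longrightarrow> r \<in> carrier R \<Longrightarrow> sm x r \<in> N"
    using assms(2) unfolding submod_def by auto
  then show ?thesis
    using assms(3) endoD(3,4)[OF assms(1)] unfolding endo_carrier_update_iff by auto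
qed

lemma submod_vimage_endo:
  assumes "right_module R G sm" "p \<in> endo R G sm" "submod R G sm X"
  shows "submod R G sm {x \<in> carrier G. p x \<in> X}"
proof -
  interpret abelian_group G by (rule right_moduleD(1)[OF assms(1)])
  show ?thesis
    using assms(3) endoD[OF assms(2)] endo_zero[OF abelian_group_axioms assms(2)]
      endo_a_inv[OF abelian_group_axioms assms(2)] right_moduleD(2)[OF assms(1)]
    unfolding submod_def by auto
qed

definition fi_core ::
  "('r,'c) ring_scheme \<Rightarrow> ('m,'b) ring_scheme \<Rightarrow> ('m \<Rightarrow> 'r \<Rightarrow> 'm) \<Rightarrow> 'm set \<Rightarrow> 'm set" where
  "fi_core R G sm Z = {y \<in> carrier G. \<forall>f\<in>endo R G sm. f y \<in> Z}"

lemma fi_core_subset: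
  assumes "right_module R G sm"
  shows "fi_core R G sm Z \<subseteq> Z"
  using endo_id[OF assms] unfolding fi_core_def by fastforce

lemma fully_invariant_fi_core:
  assumes "right_module R G sm" "submod R G sm Z"
  shows "fully_invariant R G sm (fi_core R G sm Z)"
proof -
  interpret abelian_group G by (rule right_moduleD(1)[OF assms(1)])
  let ?C = "fi_core R G sm Z"
  have Z: "\<zero>\<^bsub>G\<^esub> \<in> Z" "\<And>x y. x \<in> Z \<Longrightarrow> y \<in> Z \<Longrightarrow> x \<oplus>\<^bsub>G\<^esub> y \<in> Z"
    "\<And>x. x \<in> Z \<Longrightarrow> \<ominus>\<^bsub>G\<^esub> x \<in> Z" "\<And>x r. x \<in> Z \<Longrightarrow> r \<in> carrier R \<Longrightarrow> sm x r \<in> Z"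
    using assms(2) unfolding submod_def by auto
  have C_carrier: "y \<in> carrier G" if "y \<in> ?C" for y
    using that unfolding fi_core_def by auto
  have C_Z: "f y \<in> Z" if "y \<in> ?C" "f \<in> endo R G sm" for y f
    using that unfolding fi_core_def by auto
  have CI: "y \<in> ?C" if "y \<in> carrier G" "\<And>f. f \<in> endo R G sm \<Longrightarrow> f y \<in> Z" for y
    using that unfolding fi_core_def by auto
  show ?thesis
    unfolding fully_invariant_def submod_def
  proof (intro conjI ballI subsetI)
    show "x \<in> carrier G" if "x \<in> ?C" for x using C_carrier[OF that] .
    show "\<zero>\<^bsub>G\<^esub> \<in> ?C" by (rule CI) (simp_all add: Z(1) endo_zero[OF abelian_group_axioms])
  next
    fix x y assume "x \<in> ?C" "y \<in> ?C"
    then show "x \<oplus>\<^bsub>G\<^esub> y \<in> ?C"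
      by (intro CI) (simp_all add: C_carrier C_Z Z(2) endoD(3))
  next
    fix x assume "x \<in> ?C"
    then show "\<ominus>\<^bsub>G\<^esub> x \<in> ?C"
      by (intro CI) (simp_all add: C_carrier C_Z Z(3) endo_a_inv[OF abelian_group_axioms])
  next
    fix x r assume "x \<in> ?C" "r \<in> carrier R"
    then show "sm x r \<in> ?C"
      by (intro CI) (simp_all add: C_carrier C_Z Z(4) endoD(4) right_moduleD(2)[OF assms(1)])
  next
    fix g y assume g: "g \<in> endo R G sm" and "y \<in> g ` ?C"
    then obtain x where x: "x \<in> ?C" "y = g x" by blast
    show "y \<in> ?C"
    proof (rule CI)
      show "y \<in> carrier G" using x C_carrier endoD(1)[OF g] by blast
      fix f assume f: "f \<in> endo R G sm"
      have "emult G f g x \<in> Z" using C_Z[OF x(1) endo_emult[OF assms(1) f g]] .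
      then show "f y \<in> Z" using x C_carrier by (simp add: emult_def compose_def)
    qed
  qed
qed

locale direct_sum =
  fixes R :: "('r,'c) ring_scheme" and M :: "('m,'b) ring_scheme"
    and sm :: "'m \<Rightarrow> 'r \<Rightarrow> 'm" and N K :: "'m set"
  assumes right_module: "right_module R M sm"
    and submod_N: "submod R M sm N" and submod_K: "submod R M sm K"
    and inter_eq: "N \<inter> K = {\<zero>\<^bsub>M\<^esub>}"
    and sum_eq: "\<forall>x\<in>carrier M. \<exists>a\<in>N. \<exists>b\<in>K. x = a \<oplus>\<^bsub>M\<^esub> b"
begin

sublocale abelian_group M by (rule right_moduleD(1)[OF right_module])

abbreviation "summand \<equiv> M\<lparr>carrier := N\<rparr>"

lemma N_closed:
  "x \<in> N \<Longrightarrow> x \<in> carrier M" "\<zero>\<^bsub>M\<^esub> \<in> N"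
  "x \<in> N \<Longrightarrow> y \<in> N \<Longrightarrow> x \<oplus>\<^bsub>M\<^esub> y \<in> N" "x \<in> N \<Longrightarrow> \<ominus>\<^bsub>M\<^esub> x \<in> N"
  "x \<in> N \<Longrightarrow> r \<in> carrier R \<Longrightarrow> sm x r \<in> N"
  using submod_N unfolding submod_def by auto

lemma K_closed:
  "x \<in> K \<Longrightarrow> x \<in> carrier M" "\<zero>\<^bsub>M\<^esub> \<in> K"
  "x \<in> K \<Longrightarrow> y \<in> K \<Longrightarrow> x \<oplus>\<^bsub>M\<^esub> y \<in> K" "x \<in> K \<Longrightarrow> \<ominus>\<^bsub>M\<^esub> x \<in> K"
  "x \<in> K \<Longrightarrow> r \<in> carrier R \<Longrightarrow> sm x r \<in> K"
  using submod_K unfolding submod_def by auto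

lemma decomposition_unique:
  assumes "a \<in> N" "b \<in> K" "c \<in> N" "d \<in> K" "a \<oplus>\<^bsub>M\<^esub> b = c \<oplus>\<^bsub>M\<^esub> d"
  shows "a = c"
proof -
  have carr: "a \<in> carrier M" "b \<in> carrier M" "c \<in> carrier M" "d \<in> carrier M"
    using assms N_closed(1) K_closed(1) by auto
  have "c \<oplus>\<^bsub>M\<^esub> (d \<ominus>\<^bsub>M\<^esub> b) = (a \<oplus>\<^bsub>M\<^esub> b) \<ominus>\<^bsub>M\<^esub> b"
    using carr by (simp add: assms(5) minus_eq a_assoc)
  also have "\<dots> = a" using carr by (simp add: minus_eq a_assoc r_neg)
  finally have "c \<oplus>\<^bsub>M\<^esub> (d \<ominus>\<^bsub>M\<^esub> b) = a" .
  then have "\<ominus>\<^bsub>M\<^esub> c \<oplus>\<^bsub>M\<^esub> a = \<ominus>\<^bsub>M\<^esub> c \<oplus>\<^bsub>M\<^esub> (c \<oplus>\<^bsub>M\<^esub> (d \<ominus>\<^bsub>M\<^esub> b))" by simp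
  also have "\<dots> = d \<ominus>\<^bsub>M\<^esub> b" using carr by (simp add: r_neg1)
  finally have "\<ominus>\<^bsub>M\<^esub> c \<oplus>\<^bsub>M\<^esub> a = d \<ominus>\<^bsub>M\<^esub> b" .
  moreover have "\<ominus>\<^bsub>M\<^esub> c \<oplus>\<^bsub>M\<^esub> a \<in> N" using assms(1,3) N_closed by simp
  moreover have "d \<ominus>\<^bsub>M\<^esub> b \<in> K" using assms(2,4) K_closed by (simp add: minus_eq)
  ultimately have "\<ominus>\<^bsub>M\<^esub> c \<oplus>\<^bsub>M\<^esub> a = \<zero>\<^bsub>M\<^esub>" using inter_eq by auto
  then show ?thesis using carr r_neg2[of c a] by simp
qed

definition proj :: "'m \<Rightarrow> 'm" where
  "proj = (\<lambda>x\<in>carrier M. THE a. a \<in> N \<and> (\<exists>b\<in>K. x = a \<oplus>\<^bsub>M\<^esub> b))"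

lemma proj_sum:
  assumes "a \<in> N" "b \<in> K"
  shows "proj (a \<oplus>\<^bsub>M\<^esub> b) = a"
proof -
  have "a \<oplus>\<^bsub>M\<^esub> b \<in> carrier M" using assms N_closed(1) K_closed(1) by simp
  moreover have "(THE a'. a' \<in> N \<and> (\<exists>b'\<in>K. a \<oplus>\<^bsub>M\<^esub> b = a' \<oplus>\<^bsub>M\<^esub> b')) = a"
    using assms decomposition_unique by (intro the_equality) blast+
  ultimately show ?thesis unfolding proj_def by simp
qed

lemma proj_in_N:
  assumes "x \<in> carrier M"
  shows "proj x \<in> N"
  using sum_eq assms proj_sum by metis

lemma proj_id: "x \<in> N \<Longrightarrow> proj x = x"
  using proj_sum[of x "\<zero>\<^bsub>M\<^esub>"] K_closed(2) N_closed(1) by simp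

lemma proj_endo: "proj \<in> endo R M sm"
proof -
  have add: "proj (x \<oplus>\<^bsub>M\<^esub> y) = proj x \<oplus>\<^bsub>M\<^esub> proj y" if xy: "x \<in> carrier M" "y \<in> carrier M" for x y
  proof -
    obtain a b c d where x: "a \<in> N" "b \<in> K" "x = a \<oplus>\<^bsub>M\<^esub> b" and y: "c \<in> N" "d \<in> K" "y = c \<oplus>\<^bsub>M\<^esub> d"
      using sum_eq xy by meson
    have "x \<oplus>\<^bsub>M\<^esub> y = (a \<oplus>\<^bsub>M\<^esub> c) \<oplus>\<^bsub>M\<^esub> (b \<oplus>\<^bsub>M\<^esub> d)"
      using x y N_closed(1) K_closed(1) by (simp add: a_ac)
    then show ?thesis using x y N_closed(3) K_closed(3) proj_sum by simp
  qed
  have smult: "proj (sm x r) = sm (proj x) r" if xr: "x \<in> carrier M" "r \<in> carrier R" for x r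
  proof -
    obtain a b where x: "a \<in> N" "b \<in> K" "x = a \<oplus>\<^bsub>M\<^esub> b" using sum_eq xr by meson
    then have "sm x r = sm a r \<oplus>\<^bsub>M\<^esub> sm b r"
      using right_moduleD(3)[OF right_module] xr N_closed(1) K_closed(1) by simp
    then show ?thesis using x xr N_closed(5) K_closed(5) proj_sum by simp
  qed
  have "proj \<in> carrier M \<rightarrow>\<^sub>E carrier M"
    using proj_in_N N_closed(1) by (auto simp: PiE_iff proj_def)
  then show ?thesis unfolding endo_def using add smult by blast
qed

lemma endo_extend:
  assumes "a \<in> endo R summand sm"
  shows "(\<lambda>x\<in>carrier M. a (proj x)) \<in> endo R M sm"
  using assms proj_in_N endoD(3,4)[OF proj_endo] N_closed(1) right_moduleD(2)[OF right_module]
  unfolding endo_carrier_update_iff endo_def by (auto simp: PiE_def Pi_def)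

lemma endo_central_commute:
  assumes "endo_central R M sm z" "f \<in> endo R M sm" "x \<in> carrier M"
  shows "z (f x) = f (z x)"
proof -
  have "emult M z f x = emult M f z x" using assms(1,2) unfolding endo_central_def by simp
  then show ?thesis using assms(3) by (simp add: emult_def compose_def)
qed

lemma endo_central_preserves_N:
  assumes "endo_central R M sm z" "x \<in> N"
  shows "z x \<in> N"
proof -
  have x: "x \<in> carrier M" by (rule N_closed(1)[OF assms(2)])
  have z: "z \<in> endo R M sm" using assms(1) unfolding endo_central_def by blast
  have "proj (z x) \<in> N" by (rule proj_in_N[OF endoD(1)[OF z x]])
  moreover have "z (proj x) = proj (z x)" by (rule endo_central_commute[OF assms(1) proj_endo x])
  ultimately show ?thesis by (simp add: proj_id[OF assms(2)])
qed

lemma endo_central_restrict: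
  assumes "endo_central R M sm z"
  shows "endo_central R summand sm (restrict z N)"
  unfolding endo_central_def
proof (intro conjI ballI)
  have z: "z \<in> endo R M sm" using assms unfolding endo_central_def by blast
  show "restrict z N \<in> endo R summand sm"
    by (rule endo_restrict[OF z submod_N endo_central_preserves_N[OF assms]])
  fix g assume g: "g \<in> endo R summand sm"
  have gN: "g x \<in> N" if "x \<in> N" for x using g that unfolding endo_carrier_update_iff by auto
  have "z (g x) = g (z x)" if x: "x \<in> N" for x
  proof -
    have "z (g x) = z (g (proj x))" using x proj_id by simp
    also have "\<dots> = g (proj (z x))"
      using endo_central_commute[OF assms endo_extend[OF g], of x] x N_closed(1) endoD(1)[OF z]
      by simp
    also have "\<dots> = g (z x)" using x endo_central_preserves_N[OF assms] proj_id by simp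
    finally show ?thesis .
  qed
  then show "emult summand (restrict z N) g = emult summand g (restrict z N)"
    unfolding emult_def compose_def
    by (intro restrict_ext) (simp add: gN endo_central_preserves_N[OF assms])
qed

lemma subset_fi_core_proj_vimage:
  assumes "fully_invariant R summand sm X"
  shows "X \<subseteq> fi_core R M sm {x \<in> carrier M. proj x \<in> X}"
proof
  fix x assume x: "x \<in> X"
  have xN: "x \<in> N" using assms x unfolding fully_invariant_def submod_def by auto
  have "f x \<in> carrier M \<and> proj (f x) \<in> X" if f: "f \<in> endo R M sm" for f
  proof -
    have "emult M proj f \<in> endo R M sm" by (rule endo_emult[OF right_module proj_endo f])
    then have "restrict (emult M proj f) N \<in> endo R summand sm"
      by (rule endo_restrict[OF _ submod_N])
        (use endoD(1)[OF f] proj_in_N N_closed(1) in \<open>simp add: emult_def compose_def\<close>)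
    then have "restrict (emult M proj f) N x \<in> X"
      using assms x unfolding fully_invariant_def by blast
    then show ?thesis using xN N_closed(1) endoD(1)[OF f] by (simp add: emult_def compose_def)
  qed
  then show "x \<in> fi_core R M sm {x \<in> carrier M. proj x \<in> X}"
    using xN N_closed(1) unfolding fi_core_def by blast
qed

lemma lS_centrally_s_unital:
  assumes aip: "centrally_endo_AIP R M sm" and X: "fully_invariant R summand sm X"
    and a: "a \<in> lS R summand sm X"
  shows "\<exists>z\<in>lS R summand sm X. endo_central R summand sm z \<and> emult summand a z = a"
proof -
  let ?Y = "fi_core R M sm {x \<in> carrier M. proj x \<in> X}"
  have aE: "a \<in> endo R summand sm" and a0: "\<And>x. x \<in> X \<Longrightarrow> a x = \<zero>\<^bsub>M\<^esub>"
    using a unfolding lS_def by auto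
  have "submod R M sm X"
    using X submod_of_submod_carrier_update[OF abelian_group_axioms submod_N]
    unfolding fully_invariant_def by blast
  then have "fully_invariant R M sm ?Y"
    by (intro fully_invariant_fi_core[OF right_module] submod_vimage_endo[OF right_module proj_endo])
  then have "centrally_s_unital_ideal R M sm (lS R M sm ?Y)"
    using aip unfolding centrally_endo_AIP_def by blast
  moreover
  define b where "b = (\<lambda>x\<in>carrier M. a (proj x))"
  have "b \<in> lS R M sm ?Y"
    using endo_extend[OF aE] fi_core_subset[OF right_module] a0
    unfolding lS_def b_def by auto
  ultimately obtain z where zY: "z \<in> lS R M sm ?Y" and zc: "endo_central R M sm z"
    and bz: "emult M b z = b"
    unfolding centrally_s_unital_ideal_def by blast
  have z: "z \<in> endo R M sm" using zc unfolding endo_central_def by blast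
  have "restrict z N \<in> lS R summand sm X"
    using endo_central_restrict[OF zc] zY subset_fi_core_proj_vimage[OF X] X
    unfolding lS_def endo_central_def fully_invariant_def submod_def by auto
  moreover have "emult summand a (restrict z N) = a"
  proof
    fix x show "emult summand a (restrict z N) x = a x"
    proof (cases "x \<in> N")
      case True
      then have "b (z x) = b x"
        using fun_cong[OF bz, of x] N_closed(1) by (simp add: emult_def compose_def)
      then show ?thesis
        using True endo_central_preserves_N[OF zc] N_closed(1) endoD(1)[OF z] proj_id
        by (simp add: emult_def compose_def b_def)
    next
      case False
      then show ?thesis using endoD(2)[OF aE] by (simp add: emult_def compose_def)
    qed
  qed
  ultimately show ?thesis using endo_central_restrict[OF zc] by blast
qed

end

theorem proposition2p6:
  fixes R :: "('r,'c) ring_scheme" and M :: "('m,'b) ring_scheme"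
    and sm :: "'m \<Rightarrow> 'r \<Rightarrow> 'm" and N :: "'m set"
  assumes "right_module R M sm"
    and "centrally_endo_AIP R M sm"
    and "direct_summand R M sm N"
  shows "centrally_endo_AIP R (M\<lparr>carrier := N\<rparr>) sm"
proof -
  obtain K where "direct_sum R M sm N K"
    using assms(1,3) unfolding direct_summand_def direct_sum_def by blast
  then interpret direct_sum R M sm N K .
  have summand_module: "right_module R (M\<lparr>carrier := N\<rparr>) sm"
    by (rule right_module_submod[OF assms(1) submod_N])
  have "centrally_s_unital_ideal R (M\<lparr>carrier := N\<rparr>) sm (lS R (M\<lparr>carrier := N\<rparr>) sm X)"
    if "fully_invariant R (M\<lparr>carrier := N\<rparr>) sm X" for X
    using lS_endo_ideal[OF summand_module that] lS_centrally_s_unital[OF assms(2) that]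
    unfolding centrally_s_unital_ideal_def by blast
  with summand_module show ?thesis unfolding centrally_endo_AIP_def by blast
qed

end
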